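(* Let $d=1$. There is a constant $c_1$ depending only on the dimension such that for all $N\ge1$, $$E_Q\left((Z(N)-1)^2\right)\le\sum_{n=1}^N\left(c_1c^2_{N,1}N^{1/2}\right)^n.$$
   Context: $P^N_0$ is the uniform probability measure on nearest-neighbour walks $\omega:\{0,\dots,N\}\to\mathbb{Z}$ with $\omega(0)=0$, $|\omega(n)-\omega(n-1)|=1$. The environment $h=\{h(n,x):n\in\mathbb{N},x\in\mathbb{Z}\}$ is i.i.d. with $h(n,x)=\pm1$ each with probability $1/2$ on $(H,\mathcal{G},Q)$, independent of the walk; $E_Q$ is expectation under $Q$. $(c_{N,1})$ is a sequence of positive numbers with $\lim_{N\to\infty}c_{N,1}^2N^{1/2}=0$. $Z(N)=\int\prod_{n=1}^N[1+c_{N,1}h(n,\omega(n))]\,dP^N_0(\omega)$. *)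

theory Defs
  imports "HOL-Probability.Probability"
begin

text \<open>Nearest-neighbour walks of length N on Z started at 0. Walks are functions
  nat => int; to obtain a finite set we normalise them to be 0 after time N.\<close>
definition walks :: "nat \<Rightarrow> (nat \<Rightarrow> int) set" where
  "walks N = {\<omega>. \<omega> 0 = 0 \<and> (\<forall>n\<in>{1..N}. \<bar>\<omega> n - \<omega> (n - 1)\<bar> = 1) \<and> (\<forall>n>N. \<omega> n = 0)}"

definition walk_pmf :: "nat \<Rightarrow> (nat \<Rightarrow> int) pmf" where
  "walk_pmf N = pmf_of_set (walks N)"

type_synonym env = "nat \<times> int \<Rightarrow> real"

definition Q :: "env measure" where
  "Q = PiM UNIV (\<lambda>_. measure_pmf (pmf_of_set {-1, 1::real}))"

text \<open>Partition function Z(N) for the coupling sequence c (c N = c_{N,1}).\<close>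
definition Z :: "(nat \<Rightarrow> real) \<Rightarrow> nat \<Rightarrow> env \<Rightarrow> real" where
  "Z c N h = measure_pmf.expectation (walk_pmf N)
               (\<lambda>\<omega>. \<Prod>n=1..N. (1 + c N * h (n, \<omega> n)))"

end

theory Submission
  imports Defs
begin

(* Expanding the square and integrating out the environment, E_Q (Z(N) - 1)^2 equals
   E[prod_{n<=N} (1 + c^2 [w_n = w'_n])] - 1 for two independent walks w, w'. Splitting at the
   first meeting time gives a renewal equation, so this expectation is at most
   sum_{k<=N} (c^2 R_N)^k, where R_N is the expected number of meetings up to time N.
   For the difference walk D = w - w', every visit to 0 raises E|D| by one, so
   1 + R_N = E|D_{N+1}| <= (E D_{N+1}^2)^(1/2) = (2N + 2)^(1/2), whence R_N <= 2 sqrt N. *)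

definition walk_cons :: "nat \<Rightarrow> int \<Rightarrow> (nat \<Rightarrow> int) \<Rightarrow> nat \<Rightarrow> int" where
  "walk_cons M s \<omega> = (\<lambda>n. if n = 0 then 0 else if n \<le> Suc M then s + \<omega> (n - 1) else 0)"

definition walk_tail :: "nat \<Rightarrow> (nat \<Rightarrow> int) \<Rightarrow> nat \<Rightarrow> int" where
  "walk_tail M \<omega> = (\<lambda>n. if n \<le> M then \<omega> (Suc n) - \<omega> 1 else 0)"

lemma walks_0: "walks 0 = {\<lambda>_. 0}"
  by (auto simp: walks_def fun_eq_iff) (metis gr0I)

lemma walk_cons_apply: "1 \<le> n \<Longrightarrow> n \<le> Suc M \<Longrightarrow> walk_cons M s \<omega> n = s + \<omega> (n - 1)"
  by (simp add: walk_cons_def)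

lemma walk_cons_in_walks:
  assumes "\<omega> \<in> walks M" "s \<in> {-1, 1}"
  shows "walk_cons M s \<omega> \<in> walks (Suc M)"
proof -
  have \<omega>: "\<omega> 0 = 0" "\<And>n. n \<in> {1..M} \<Longrightarrow> \<bar>\<omega> n - \<omega> (n - 1)\<bar> = 1"
    using assms(1) by (auto simp: walks_def)
  have "\<bar>walk_cons M s \<omega> n - walk_cons M s \<omega> (n - 1)\<bar> = 1" if "n \<in> {1..Suc M}" for n
  proof (cases "n = 1")
    case True
    then show ?thesis using assms(2) \<omega>(1) by (auto simp: walk_cons_def)
  next
    case False
    then have "n - 1 \<in> {1..M}" using that by auto
    then show ?thesis using \<omega>(2)[of "n - 1"] that False by (auto simp: walk_cons_def)
  qed
  then show ?thesis by (auto simp: walks_def walk_cons_def)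
qed

lemma walk_tail_in_walks:
  assumes "\<omega> \<in> walks (Suc M)"
  shows "walk_tail M \<omega> \<in> walks M" and "\<omega> 1 \<in> {-1, 1}"
    and "\<omega> = walk_cons M (\<omega> 1) (walk_tail M \<omega>)"
proof -
  have \<omega>: "\<omega> 0 = 0" "\<And>n. n \<in> {1..Suc M} \<Longrightarrow> \<bar>\<omega> n - \<omega> (n - 1)\<bar> = 1"
    "\<And>n. n > Suc M \<Longrightarrow> \<omega> n = 0"
    using assms by (auto simp: walks_def)
  show "\<omega> 1 \<in> {-1, 1}" using \<omega>(1) \<omega>(2)[of 1] by auto
  have "\<bar>walk_tail M \<omega> n - walk_tail M \<omega> (n - 1)\<bar> = 1" if "n \<in> {1..M}" for n
    using \<omega>(2)[of "Suc n"] that by (auto simp: walk_tail_def)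
  then show "walk_tail M \<omega> \<in> walks M" by (auto simp: walks_def walk_tail_def)
  show "\<omega> = walk_cons M (\<omega> 1) (walk_tail M \<omega>)"
  proof
    fix n
    show "\<omega> n = walk_cons M (\<omega> 1) (walk_tail M \<omega>) n"
      using \<omega>(1) \<omega>(3)[of n] by (cases n) (auto simp: walk_cons_def walk_tail_def)
  qed
qed

lemma walk_cons_inj:
  assumes "\<omega> \<in> walks M" "\<omega>' \<in> walks M" "walk_cons M s \<omega> = walk_cons M s' \<omega>'"
  shows "s = s'" and "\<omega> = \<omega>'"
proof -
  have z: "\<omega> 0 = 0" "\<omega>' 0 = 0" "\<And>n. n > M \<Longrightarrow> \<omega> n = 0" "\<And>n. n > M \<Longrightarrow> \<omega>' n = 0"
    using assms(1,2) by (auto simp: walks_def)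
  have eq: "walk_cons M s \<omega> n = walk_cons M s' \<omega>' n" for n
    using assms(3) by simp
  show "s = s'" using eq[of 1] z by (simp add: walk_cons_def)
  show "\<omega> = \<omega>'"
  proof
    fix n
    show "\<omega> n = \<omega>' n"
      using eq[of "Suc n"] z \<open>s = s'\<close> by (cases "n \<le> M") (auto simp: walk_cons_def)
  qed
qed

lemma inj_on_walk_cons: "inj_on (\<lambda>(s, \<omega>). walk_cons M s \<omega>) ({-1, 1} \<times> walks M)"
  by (rule inj_onI) (auto dest: walk_cons_inj)

lemma walks_Suc: "walks (Suc M) = (\<lambda>(s, \<omega>). walk_cons M s \<omega>) ` ({-1, 1} \<times> walks M)"
proof
  show "walks (Suc M) \<subseteq> (\<lambda>(s, \<omega>). walk_cons M s \<omega>) ` ({-1, 1} \<times> walks M)"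
    using walk_tail_in_walks by (force intro: image_eqI)
  show "(\<lambda>(s, \<omega>). walk_cons M s \<omega>) ` ({-1, 1} \<times> walks M) \<subseteq> walks (Suc M)"
    using walk_cons_in_walks by auto
qed

lemma finite_walks: "finite (walks M)" and card_walks: "card (walks M) = 2 ^ M"
proof -
  have "finite (walks M) \<and> card (walks M) = 2 ^ M"
  proof (induction M)
    case 0
    then show ?case by (simp add: walks_0)
  next
    case (Suc M)
    have "card (walks (Suc M)) = card ({-1::int, 1} \<times> walks M)"
      unfolding walks_Suc by (rule card_image[OF inj_on_walk_cons])
    then show ?case using Suc by (simp add: walks_Suc card_cartesian_product)
  qed
  then show "finite (walks M)" "card (walks M) = 2 ^ M" by auto
qed

lemma walks_nonempty: "walks M \<noteq> {}"
  using card_walks[of M] by (metis card.empty power_not_zero zero_neq_numeral)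

lemma sum_walks_Suc:
  "(\<Sum>\<omega>\<in>walks (Suc M). f \<omega>) = (\<Sum>s\<in>{-1, 1::int}. \<Sum>\<omega>\<in>walks M. f (walk_cons M s \<omega>))"
  unfolding walks_Suc sum.reindex[OF inj_on_walk_cons]
  by (simp add: sum.cartesian_product split_beta)

definition pair_avg :: "nat \<Rightarrow> ((nat \<Rightarrow> int) \<Rightarrow> (nat \<Rightarrow> int) \<Rightarrow> real) \<Rightarrow> real" where
  "pair_avg M \<Phi> = (\<Sum>\<omega>\<in>walks M. \<Sum>\<omega>'\<in>walks M. \<Phi> \<omega> \<omega>') / (2 ^ M) ^ 2"

lemma pair_avg_0: "pair_avg 0 \<Phi> = \<Phi> (\<lambda>_. 0) (\<lambda>_. 0)"
  by (simp add: pair_avg_def walks_0)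

lemma pair_avg_Suc:
  "pair_avg (Suc M) \<Phi> = (\<Sum>s\<in>{-1, 1::int}. \<Sum>s'\<in>{-1, 1::int}.
     pair_avg M (\<lambda>\<omega> \<omega>'. \<Phi> (walk_cons M s \<omega>) (walk_cons M s' \<omega>'))) / 4"
proof -
  have "pair_avg (Suc M) \<Phi> = (\<Sum>s\<in>{-1, 1::int}. \<Sum>s'\<in>{-1, 1::int}. \<Sum>\<omega>\<in>walks M. \<Sum>\<omega>'\<in>walks M.
       \<Phi> (walk_cons M s \<omega>) (walk_cons M s' \<omega>')) / (2 ^ Suc M) ^ 2"
    by (simp add: pair_avg_def sum_walks_Suc sum.swap[of _ "walks M" "{-1, 1::int}"])
  then show ?thesis
    unfolding pair_avg_def sum_divide_distrib[symmetric] by (simp add: power2_eq_square)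
qed

lemma pair_avg_cong:
  "(\<And>\<omega> \<omega>'. \<omega> \<in> walks M \<Longrightarrow> \<omega>' \<in> walks M \<Longrightarrow> \<Phi> \<omega> \<omega>' = \<Psi> \<omega> \<omega>') \<Longrightarrow> pair_avg M \<Phi> = pair_avg M \<Psi>"
  unfolding pair_avg_def by (intro arg_cong[where f="\<lambda>x. x / _"] sum.cong refl) auto

lemma pair_avg_const: "pair_avg M (\<lambda>_ _. c) = c"
  by (simp add: pair_avg_def finite_walks card_walks power2_eq_square)

lemma pair_avg_cmult: "pair_avg M (\<lambda>\<omega> \<omega>'. c * \<Phi> \<omega> \<omega>') = c * pair_avg M \<Phi>"
  by (simp add: pair_avg_def sum_distrib_left)

lemma pair_avg_nonneg: "(\<And>\<omega> \<omega>'. 0 \<le> \<Phi> \<omega> \<omega>') \<Longrightarrow> 0 \<le> pair_avg M \<Phi>"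
  unfolding pair_avg_def by (intro divide_nonneg_pos sum_nonneg) auto

definition step_avg :: "(int \<Rightarrow> real) \<Rightarrow> int \<Rightarrow> real" where
  "step_avg F d = (2 * F d + F (d + 2) + F (d - 2)) / 4"

lemma sum_steps_eq_step_avg:
  "(\<Sum>s\<in>{-1, 1::int}. \<Sum>s'\<in>{-1, 1::int}. F (d + s - s')) / 4 = step_avg F d"
  by (simp add: step_avg_def algebra_simps)

lemma step_avg_add: "step_avg (\<lambda>x. F x + G x) d = step_avg F d + step_avg G d"
  by (simp add: step_avg_def field_simps)

lemma step_avg_cmult: "step_avg (\<lambda>x. c * F x) d = c * step_avg F d"
  by (simp add: step_avg_def field_simps)

lemma step_avg_const: "step_avg (\<lambda>x. c) d = c"
  by (simp add: step_avg_def)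

lemma step_avg_sum: "finite S \<Longrightarrow> step_avg (\<lambda>x. \<Sum>m\<in>S. F m x) d = (\<Sum>m\<in>S. step_avg (F m) d)"
  by (induction S rule: finite_induct) (simp_all add: step_avg_def field_simps)

definition diff_expect :: "nat \<Rightarrow> (int \<Rightarrow> real) \<Rightarrow> int \<Rightarrow> real" where
  "diff_expect M f d = pair_avg M (\<lambda>\<omega> \<omega>'. f (d + \<omega> M - \<omega>' M))"

lemma diff_expect_0: "diff_expect 0 f = f"
  by (simp add: fun_eq_iff diff_expect_def pair_avg_0)

lemma diff_expect_Suc: "diff_expect (Suc M) f d = step_avg (diff_expect M f) d"
proof -
  have "d + walk_cons M s \<omega> (Suc M) - walk_cons M s' \<omega>' (Suc M) = (d + s - s') + \<omega> M - \<omega>' M"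
    for s s' \<omega> \<omega>'
    by (simp add: walk_cons_apply)
  then have "diff_expect (Suc M) f d
      = (\<Sum>s\<in>{-1, 1::int}. \<Sum>s'\<in>{-1, 1::int}. diff_expect M f (d + s - s')) / 4"
    unfolding diff_expect_def pair_avg_Suc by (simp only:)
  then show ?thesis by (simp only: sum_steps_eq_step_avg)
qed

lemma diff_expect_nonneg: "(\<And>x. 0 \<le> f x) \<Longrightarrow> 0 \<le> diff_expect M f d"
  unfolding diff_expect_def by (rule pair_avg_nonneg)

lemma diff_expect_square: "diff_expect M (\<lambda>x. (real_of_int x)\<^sup>2) d = (real_of_int d)\<^sup>2 + 2 * real M"
  by (induction M arbitrary: d)
     (simp_all add: diff_expect_0 diff_expect_Suc step_avg_def power2_eq_square field_simps)

lemma step_avg_square_le: "(step_avg F d)\<^sup>2 \<le> step_avg (\<lambda>x. (F x)\<^sup>2) d"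
proof -
  have "0 \<le> 2 * (F d - F (d + 2))\<^sup>2 + 2 * (F d - F (d - 2))\<^sup>2 + (F (d + 2) - F (d - 2))\<^sup>2"
    by simp
  then show ?thesis by (simp add: step_avg_def power2_eq_square field_simps)
qed

lemma diff_expect_square_le: "(diff_expect M f d)\<^sup>2 \<le> diff_expect M (\<lambda>x. (f x)\<^sup>2) d"
proof (induction M arbitrary: d)
  case 0
  then show ?case by (simp add: diff_expect_0)
next
  case (Suc M)
  have "(diff_expect (Suc M) f d)\<^sup>2 \<le> step_avg (\<lambda>x. (diff_expect M f x)\<^sup>2) d"
    unfolding diff_expect_Suc by (rule step_avg_square_le)
  also have "\<dots> \<le> step_avg (diff_expect M (\<lambda>x. (f x)\<^sup>2)) d"
    using Suc.IH[of d] Suc.IH[of "d + 2"] Suc.IH[of "d - 2"] by (simp add: step_avg_def)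
  finally show ?case by (simp add: diff_expect_Suc)
qed

abbreviation meet_prob :: "nat \<Rightarrow> int \<Rightarrow> real" where
  "meet_prob M d \<equiv> diff_expect M (\<lambda>x. of_bool (x = 0)) d"

lemma abs_step_avg:
  assumes "even d"
  shows "step_avg (\<lambda>x. real_of_int \<bar>x\<bar>) d = real_of_int \<bar>d\<bar> + of_bool (d = 0)"
proof -
  obtain k where "d = 2 * k" using assms by (auto elim: evenE)
  then have "2 * \<bar>d\<bar> + \<bar>d + 2\<bar> + \<bar>d - 2\<bar> = 4 * \<bar>d\<bar> + 4 * of_bool (d = 0)"
    by (cases "k = 0"; cases "k > 0") auto
  then have "real_of_int (2 * \<bar>d\<bar> + \<bar>d + 2\<bar> + \<bar>d - 2\<bar>) = 4 * \<bar>d\<bar> + 4 * of_bool (d = 0)"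
    by (metis of_int_eq_iff of_int_of_bool of_int_add of_int_mult of_int_numeral of_int_abs)
  then show ?thesis by (simp add: step_avg_def)
qed

lemma diff_expect_abs:
  "even d \<Longrightarrow> diff_expect M (\<lambda>x. real_of_int \<bar>x\<bar>) d = real_of_int \<bar>d\<bar> + (\<Sum>m<M. meet_prob m d)"
proof (induction M arbitrary: d)
  case 0
  then show ?case by (simp add: diff_expect_0)
next
  case (Suc M)
  have "even (d + 2)" "even (d - 2)" using Suc.prems by auto
  then have "diff_expect (Suc M) (\<lambda>x. real_of_int \<bar>x\<bar>) d
      = step_avg (\<lambda>x. real_of_int \<bar>x\<bar>) d + (\<Sum>m<M. meet_prob (Suc m) d)"
    using Suc.IH[OF Suc.prems] Suc.IH[of "d + 2"] Suc.IH[of "d - 2"]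
    by (simp add: diff_expect_Suc step_avg_def sum.distrib sum_divide_distrib[symmetric]
        sum_distrib_left[symmetric] field_simps)
  also have "\<dots> = real_of_int \<bar>d\<bar> + (\<Sum>m<Suc M. meet_prob m d)"
    using abs_step_avg[OF Suc.prems] by (subst sum.lessThan_Suc_shift) (simp add: diff_expect_0)
  finally show ?case .
qed

definition collision_avg :: "real \<Rightarrow> nat \<Rightarrow> int \<Rightarrow> real" where
  "collision_avg t M d = pair_avg M (\<lambda>\<omega> \<omega>'. \<Prod>n=1..M. 1 + t * of_bool (d + \<omega> n - \<omega>' n = 0))"

lemma collision_avg_0: "collision_avg t 0 d = 1"
  by (simp add: collision_avg_def pair_avg_0)

lemma prod_atLeast1_atMost_Suc: "(\<Prod>n=1..Suc M. g n) = g 1 * (\<Prod>n=1..M. g (Suc n))"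
  by (induction M) (simp_all add: prod.cl_ivl_Suc mult.assoc)

lemma collision_avg_Suc:
  "collision_avg t (Suc M) d = step_avg (\<lambda>x. (1 + t * of_bool (x = 0)) * collision_avg t M x) d"
proof -
  have "(\<Prod>n=1..Suc M. 1 + t * of_bool (d + walk_cons M s \<omega> n - walk_cons M s' \<omega>' n = 0))
    = (1 + t * of_bool (d + s - s' = 0)) * (\<Prod>n=1..M. 1 + t * of_bool ((d + s - s') + \<omega> n - \<omega>' n = 0))"
    if "\<omega> 0 = 0" "\<omega>' 0 = 0" for s s' \<omega> \<omega>'
  proof -
    have "(\<Prod>n=1..M. 1 + t * of_bool (d + walk_cons M s \<omega> (Suc n) - walk_cons M s' \<omega>' (Suc n) = 0))
       = (\<Prod>n=1..M. 1 + t * of_bool ((d + s - s') + \<omega> n - \<omega>' n = 0))"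
      by (intro prod.cong refl) (simp add: walk_cons_def algebra_simps)
    then show ?thesis using that unfolding prod_atLeast1_atMost_Suc by (simp add: walk_cons_def)
  qed
  then have "collision_avg t (Suc M) d = (\<Sum>s\<in>{-1, 1::int}. \<Sum>s'\<in>{-1, 1::int}.
      (1 + t * of_bool (d + s - s' = 0)) * collision_avg t M (d + s - s')) / 4"
    unfolding collision_avg_def pair_avg_Suc
    by (intro arg_cong[where f="\<lambda>x. x / 4"] sum.cong refl, subst pair_avg_cong[where M=M])
       (auto simp: walks_def pair_avg_cmult)
  then show ?thesis
    using sum_steps_eq_step_avg[of "\<lambda>x. (1 + t * of_bool (x = 0)) * collision_avg t M x" d] by simp
qed

lemma sum_atLeast1_atMost_Suc: "(\<Sum>n=1..Suc M. g n) = g 1 + (\<Sum>n=1..M. g (Suc n))"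
  by (induction M) (simp_all add: sum.cl_ivl_Suc add.assoc)

lemma collision_avg_renewal:
  "collision_avg t M d = 1 + t * (\<Sum>m=1..M. collision_avg t (M - m) 0 * meet_prob m d)"
proof (induction M arbitrary: d)
  case 0
  then show ?case by (simp add: collision_avg_0)
next
  case (Suc M)
  have "(\<lambda>x. (1 + t * of_bool (x = 0)) * collision_avg t M x)
     = (\<lambda>x. 1 + t * (\<Sum>m=1..M. collision_avg t (M - m) 0 * meet_prob m x)
            + (t * collision_avg t M 0) * of_bool (x = 0))"
    using Suc.IH by (auto simp: fun_eq_iff algebra_simps)
  then have "collision_avg t (Suc M) d = 1 + t * (\<Sum>m=1..M. collision_avg t (M - m) 0 * meet_prob (Suc m) d)
      + (t * collision_avg t M 0) * meet_prob 1 d"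
    by (simp add: collision_avg_Suc step_avg_add step_avg_const step_avg_cmult step_avg_sum
        diff_expect_Suc diff_expect_0)
  also have "\<dots> = 1 + t * (\<Sum>m=1..Suc M. collision_avg t (Suc M - m) 0 * meet_prob m d)"
    by (subst sum_atLeast1_atMost_Suc) (simp add: algebra_simps)
  finally show ?case .
qed

definition expected_meetings :: "nat \<Rightarrow> real" where
  "expected_meetings M = (\<Sum>m=1..M. meet_prob m 0)"

lemma expected_meetings_nonneg: "0 \<le> expected_meetings M"
  unfolding expected_meetings_def by (intro sum_nonneg diff_expect_nonneg) simp

lemma expected_meetings_mono: "M' \<le> M \<Longrightarrow> expected_meetings M' \<le> expected_meetings M"
  unfolding expected_meetings_def by (intro sum_mono2 diff_expect_nonneg) auto

lemma collision_avg_le_geometric: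
  assumes "0 \<le> t"
  shows "collision_avg t M 0 \<le> (\<Sum>k\<le>M. (t * expected_meetings M) ^ k)"
proof (induction M rule: less_induct)
  case (less M)
  show ?case
  proof (cases M)
    case 0
    then show ?thesis by (simp add: collision_avg_0)
  next
    case (Suc K)
    define x where "x = t * expected_meetings M"
    define S where "S = (\<Sum>k\<le>K. x ^ k)"
    have "0 \<le> x" using assms expected_meetings_nonneg by (simp add: x_def)
    have IH: "collision_avg t (M - m) 0 \<le> S" if "m \<in> {1..M}" for m
    proof -
      have "collision_avg t (M - m) 0 \<le> (\<Sum>k\<le>M - m. (t * expected_meetings (M - m)) ^ k)"
        using less.IH[of "M - m"] that by auto
      also have "\<dots> \<le> (\<Sum>k\<le>M - m. x ^ k)"
        using assms expected_meetings_nonneg expected_meetings_mono[of "M - m" M]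
        by (auto simp: x_def intro!: sum_mono power_mono mult_left_mono)
      also have "\<dots> \<le> (\<Sum>k\<le>K. x ^ k)"
        using that Suc \<open>0 \<le> x\<close> by (intro sum_mono2) auto
      finally show ?thesis by (simp add: S_def)
    qed
    have "collision_avg t M 0 = 1 + t * (\<Sum>m=1..M. collision_avg t (M - m) 0 * meet_prob m 0)"
      by (rule collision_avg_renewal)
    also have "\<dots> \<le> 1 + t * (\<Sum>m=1..M. S * meet_prob m 0)"
      using assms IH by (intro add_left_mono mult_left_mono sum_mono mult_right_mono diff_expect_nonneg) auto
    also have "\<dots> = 1 + x * S"
      by (simp add: x_def expected_meetings_def sum_distrib_left[symmetric])
    also have "\<dots> = (\<Sum>k\<le>M. x ^ k)"
      unfolding Suc S_def by (subst sum.atMost_Suc_shift) (simp add: sum_distrib_left)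
    finally show ?thesis by (simp add: x_def)
  qed
qed

lemma expected_meetings_le_sqrt:
  assumes "1 \<le> N"
  shows "expected_meetings N \<le> 2 * sqrt (real N)"
proof -
  have "diff_expect (Suc N) (\<lambda>x. real_of_int \<bar>x\<bar>) 0 = (\<Sum>m<Suc N. meet_prob m 0)"
    using diff_expect_abs[of 0 "Suc N"] by simp
  also have "\<dots> = 1 + expected_meetings N"
    unfolding expected_meetings_def
    by (subst sum.lessThan_Suc_shift) (simp add: diff_expect_0 sum.atLeast1_atMost_eq)
  finally have "(1 + expected_meetings N)\<^sup>2 \<le> 2 * real N + 2"
    using diff_expect_square_le[of "Suc N" "\<lambda>x. real_of_int \<bar>x\<bar>" 0] diff_expect_square[of "Suc N" 0]
    by simp
  also have "\<dots> \<le> (1 + 2 * sqrt (real N))\<^sup>2"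
  proof -
    have "(1 + 2 * sqrt (real N))\<^sup>2 = 1 + 4 * sqrt (real N) + 4 * real N"
      by (simp add: power2_sum power_mult_distrib)
    moreover have "1 \<le> real N" using assms by simp
    ultimately show ?thesis using real_sqrt_ge_zero[of "real N"] by linarith
  qed
  finally have "1 + expected_meetings N \<le> 1 + 2 * sqrt (real N)"
    by (rule power2_le_imp_le) simp
  then show ?thesis by simp
qed

definition coin :: "real measure" where
  "coin = measure_pmf (pmf_of_set {-1, 1})"

lemma Q_eq_PiM_coin: "Q = PiM UNIV (\<lambda>_. coin)"
  by (simp add: Q_def coin_def)

lemma prob_space_coin: "prob_space coin"
  by (simp add: coin_def prob_space_measure_pmf)

lemma prob_space_Q: "prob_space Q"
  unfolding Q_eq_PiM_coin by (rule prob_space_PiM) (simp add: prob_space_coin)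

lemma integral_coin_id: "(\<integral>x. x \<partial>coin) = 0"
  by (simp add: coin_def integral_pmf_of_set)

lemma integral_coin_square: "(\<integral>x. x\<^sup>2 \<partial>coin) = 1"
  by (simp add: coin_def integral_pmf_of_set)

lemma component_measurable_coin: "(\<lambda>h. h a) \<in> measurable (PiM K (\<lambda>_. coin)) coin" if "a \<in> K"
  using that by (rule measurable_component_singleton)

lemma component_borel_measurable: "a \<in> K \<Longrightarrow> (\<lambda>h. h a) \<in> borel_measurable (PiM K (\<lambda>_. coin))"
proof -
  assume "a \<in> K"
  moreover have "(\<lambda>x. x) \<in> borel_measurable coin" by (simp add: coin_def)
  ultimately show ?thesis by (rule measurable_compose[OF component_measurable_coin])
qed

lemma distr_Q_component: "distr Q coin (\<lambda>h. h a) = coin"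
  unfolding Q_eq_PiM_coin by (rule distr_PiM_component) (simp_all add: prob_space_coin)

lemma
  fixes f :: "real \<Rightarrow> real"
  shows integrable_Q_component: "integrable Q (\<lambda>h. f (h a))"
    and integral_Q_component: "(\<integral>h. f (h a) \<partial>Q) = (\<integral>x. f x \<partial>coin)"
proof -
  have meas: "(\<lambda>h. h a) \<in> measurable Q coin" "f \<in> borel_measurable coin"
    by (simp_all add: Q_eq_PiM_coin component_measurable_coin) (simp add: coin_def)
  have "integrable coin f"
    unfolding coin_def by (rule integrable_measure_pmf_finite) simp
  then show "integrable Q (\<lambda>h. f (h a))"
    using integrable_distr_eq[OF meas] distr_Q_component[of a] by simp
  show "(\<integral>h. f (h a) \<partial>Q) = (\<integral>x. f x \<partial>coin)"
    using integral_distr[OF meas] distr_Q_component[of a] by simp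
qed

lemma indep_vars_components: "prob_space.indep_vars Q (\<lambda>_. coin) (\<lambda>a h. h a) UNIV"
proof -
  interpret prob_space Q by (rule prob_space_Q)
  have "distr Q (PiM UNIV (\<lambda>_. coin)) (\<lambda>h. \<lambda>a\<in>UNIV. h a) = PiM UNIV (\<lambda>a. distr Q coin (\<lambda>h. h a))"
    by (simp add: distr_Q_component Q_eq_PiM_coin[symmetric] distr_id2 restrict_def)
  then show ?thesis
    by (subst indep_vars_iff_distr_eq_PiM) (simp_all add: Q_eq_PiM_coin component_measurable_coin)
qed

lemma integral_Q_mult_components: "(\<integral>h. h a * h b \<partial>Q) = of_bool (a = b)"
  and integrable_Q_mult_components: "integrable Q (\<lambda>h. h a * h b)"
proof -
  interpret prob_space Q by (rule prob_space_Q)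
  have "(\<integral>h. h a * h b \<partial>Q) = of_bool (a = b) \<and> integrable Q (\<lambda>h. h a * h b)"
  proof (cases "a = b")
    case True
    then show ?thesis
      using integral_Q_component[of "\<lambda>x. x\<^sup>2" a] integrable_Q_component[of "\<lambda>x. x\<^sup>2" a]
      by (simp add: integral_coin_square[unfolded power2_eq_square] power2_eq_square)
  next
    case False
    have ind: "indep_vars (\<lambda>_. borel) (\<lambda>a h. h a) {a, b}"
      using indep_vars_compose2[OF indep_vars_components, of "\<lambda>_ x. x" "\<lambda>_. borel"]
      by (rule indep_vars_subset) (simp_all add: coin_def)
    have int: "\<And>i. i \<in> {a, b} \<Longrightarrow> integrable Q (\<lambda>h. h i)"
      using integrable_Q_component[of "\<lambda>x. x"] by simp
    have "(\<integral>h. (\<Prod>i\<in>{a, b}. h i) \<partial>Q) = (\<Prod>i\<in>{a, b}. \<integral>h. h i \<partial>Q)"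
      by (rule indep_vars_lebesgue_integral[OF _ ind int]) simp
    moreover have "integrable Q (\<lambda>h. \<Prod>i\<in>{a, b}. h i)"
      by (rule indep_vars_integrable[OF _ ind int]) simp
    ultimately show ?thesis
      using False integral_Q_component[of "\<lambda>x. x"] integral_coin_id by simp
  qed
  then show "(\<integral>h. h a * h b \<partial>Q) = of_bool (a = b)" "integrable Q (\<lambda>h. h a * h b)"
    by auto
qed

text \<open>Factors with different time indices \<open>n\<close> only read the disjoint coordinate blocks
  \<open>{n} \<times> UNIV\<close> of the environment, hence are independent.\<close>
lemma
  assumes "finite I"
  shows integrable_Q_prod_pair:
      "integrable Q (\<lambda>h. \<Prod>n\<in>I. (1 + \<alpha> * h (n, \<omega> n)) * (1 + \<beta> * h (n, \<omega>' n)))"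
    and integral_Q_prod_pair:
      "(\<integral>h. (\<Prod>n\<in>I. (1 + \<alpha> * h (n, \<omega> n)) * (1 + \<beta> * h (n, \<omega>' n))) \<partial>Q)
         = (\<Prod>n\<in>I. 1 + \<alpha> * \<beta> * of_bool (\<omega> n = \<omega>' n))"
proof -
  interpret prob_space Q by (rule prob_space_Q)
  define Y where "Y n f = (1 + \<alpha> * f (n, \<omega> n)) * (1 + \<beta> * f (n, \<omega>' n))"
    for n :: nat and f :: "nat \<times> int \<Rightarrow> real"
  define X where "X n h = Y n (restrict h ({n} \<times> UNIV))" for n h
  have X_eq: "X n h = (1 + \<alpha> * h (n, \<omega> n)) * (1 + \<beta> * h (n, \<omega>' n))" for n h
    by (simp add: X_def Y_def)
  have blocks: "indep_vars (\<lambda>n. PiM ({n} \<times> UNIV) (\<lambda>_. coin)) (\<lambda>n h. restrict h ({n} \<times> UNIV)) I"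
    by (rule indep_vars_restrict[OF indep_vars_components]) (auto simp: disjoint_family_on_def)
  have "Y n \<in> borel_measurable (PiM ({n} \<times> UNIV) (\<lambda>_. coin))" for n
    using component_borel_measurable[of "(n, \<omega> n)" "{n} \<times> UNIV"]
      component_borel_measurable[of "(n, \<omega>' n)" "{n} \<times> UNIV"]
    unfolding Y_def by measurable
  then have indep: "indep_vars (\<lambda>_. borel) X I"
    unfolding X_def[abs_def] by (rule indep_vars_compose2[OF blocks])
  have X_expand: "X n h = 1 + \<alpha> * h (n, \<omega> n) + \<beta> * h (n, \<omega>' n) + \<alpha> * \<beta> * (h (n, \<omega> n) * h (n, \<omega>' n))"
    for n h by (simp add: X_eq algebra_simps)
  have integrable_X: "integrable Q (X n)"
    and integral_X: "(\<integral>h. X n h \<partial>Q) = 1 + \<alpha> * \<beta> * of_bool (\<omega> n = \<omega>' n)" for n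
    unfolding X_expand[abs_def]
    using integrable_Q_component[of "\<lambda>x. x"] integral_Q_component[of "\<lambda>x. x"] integral_coin_id
      integrable_Q_mult_components integral_Q_mult_components[of "(n, \<omega> n)" "(n, \<omega>' n)"]
    by (simp_all add: prob_space)
  show "integrable Q (\<lambda>h. \<Prod>n\<in>I. (1 + \<alpha> * h (n, \<omega> n)) * (1 + \<beta> * h (n, \<omega>' n)))"
    using indep_vars_integrable[OF assms indep integrable_X] by (simp add: X_eq)
  show "(\<integral>h. (\<Prod>n\<in>I. (1 + \<alpha> * h (n, \<omega> n)) * (1 + \<beta> * h (n, \<omega>' n))) \<partial>Q)
      = (\<Prod>n\<in>I. 1 + \<alpha> * \<beta> * of_bool (\<omega> n = \<omega>' n))"
    using indep_vars_lebesgue_integral[OF assms indep integrable_X] integral_X by (simp add: X_eq)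
qed

lemma
  fixes \<Phi> :: "(nat \<Rightarrow> int) \<Rightarrow> (nat \<Rightarrow> int) \<Rightarrow> 'a \<Rightarrow> real"
  assumes "\<And>\<omega> \<omega>'. integrable M (\<Phi> \<omega> \<omega>')"
  shows integrable_pair_avg: "integrable M (\<lambda>x. pair_avg N (\<lambda>\<omega> \<omega>'. \<Phi> \<omega> \<omega>' x))"
    and integral_pair_avg:
      "(\<integral>x. pair_avg N (\<lambda>\<omega> \<omega>'. \<Phi> \<omega> \<omega>' x) \<partial>M) = pair_avg N (\<lambda>\<omega> \<omega>'. \<integral>x. \<Phi> \<omega> \<omega>' x \<partial>M)"
  using assms by (simp_all add: pair_avg_def)

lemma Z_eq_pair_avg: "Z c N h = pair_avg N (\<lambda>\<omega> _. \<Prod>n=1..N. 1 + c N * h (n, \<omega> n))"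
  unfolding Z_def walk_pmf_def pair_avg_def
  by (subst integral_pmf_of_set)
     (simp_all add: finite_walks walks_nonempty card_walks power2_eq_square
        sum_distrib_left[symmetric])

lemma Z_square_eq_pair_avg:
  "(Z c N h)\<^sup>2 = pair_avg N (\<lambda>\<omega> \<omega>'. \<Prod>n=1..N. (1 + c N * h (n, \<omega> n)) * (1 + c N * h (n, \<omega>' n)))"
  unfolding Z_def walk_pmf_def pair_avg_def
  by (subst integral_pmf_of_set)
     (simp_all add: finite_walks walks_nonempty card_walks power2_eq_square sum_product
        prod.distrib)

lemma second_moment_Z: "(\<integral>h. (Z c N h - 1)\<^sup>2 \<partial>Q) = collision_avg ((c N)\<^sup>2) N 0 - 1"
proof -
  interpret prob_space Q by (rule prob_space_Q)
  define F where "F \<omega> h = (\<Prod>n=1..N. 1 + c N * h (n, \<omega> n))"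
    for \<omega> :: "nat \<Rightarrow> int" and h :: env
  have F: "integrable Q (F \<omega>)" "(\<integral>h. F \<omega> h \<partial>Q) = 1" for \<omega>
    unfolding F_def[abs_def] using integrable_Q_prod_pair[where \<beta>=0] integral_Q_prod_pair[where \<beta>=0]
    by simp_all
  have Z_eq: "Z c N h = pair_avg N (\<lambda>\<omega> _. F \<omega> h)" for h
    by (simp add: Z_eq_pair_avg F_def)
  have Z: "integrable Q (\<lambda>h. Z c N h)" "(\<integral>h. Z c N h \<partial>Q) = 1"
    using integrable_pair_avg[where \<Phi>="\<lambda>\<omega> _. F \<omega>", OF F(1)]
      integral_pair_avg[where \<Phi>="\<lambda>\<omega> _. F \<omega>", OF F(1)]
    by (simp_all add: Z_eq F(2) pair_avg_const)
  define G where "G \<omega> \<omega>' h = (\<Prod>n=1..N. (1 + c N * h (n, \<omega> n)) * (1 + c N * h (n, \<omega>' n)))"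
    for \<omega> \<omega>' :: "nat \<Rightarrow> int" and h :: env
  have G: "integrable Q (G \<omega> \<omega>')"
    "(\<integral>h. G \<omega> \<omega>' h \<partial>Q) = (\<Prod>n=1..N. 1 + (c N)\<^sup>2 * of_bool (\<omega> n = \<omega>' n))" for \<omega> \<omega>'
    unfolding G_def[abs_def] using integrable_Q_prod_pair integral_Q_prod_pair
    by (simp_all add: power2_eq_square)
  have Z_square: "(Z c N h)\<^sup>2 = pair_avg N (\<lambda>\<omega> \<omega>'. G \<omega> \<omega>' h)" for h
    by (simp add: Z_square_eq_pair_avg G_def)
  have Z2: "integrable Q (\<lambda>h. (Z c N h)\<^sup>2)" "(\<integral>h. (Z c N h)\<^sup>2 \<partial>Q) = collision_avg ((c N)\<^sup>2) N 0"
    using integrable_pair_avg[where \<Phi>=G, OF G(1)] integral_pair_avg[where \<Phi>=G, OF G(1)]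
    by (simp_all add: Z_square G(2) collision_avg_def)
  have "(\<lambda>h. (Z c N h - 1)\<^sup>2) = (\<lambda>h. (Z c N h)\<^sup>2 - 2 * Z c N h + 1)"
    by (simp add: fun_eq_iff power2_diff)
  then show ?thesis
    using Z Z2 by (simp add: prob_space)
qed

theorem lemma12:
  shows "\<exists>c1::real. \<forall>c::nat \<Rightarrow> real.
           (\<forall>N. c N > 0) \<longrightarrow> ((\<lambda>N. (c N)\<^sup>2 * sqrt (real N)) \<longlonglongrightarrow> 0) \<longrightarrow>
           (\<forall>N\<ge>1. (\<integral>h. (Z c N h - 1)\<^sup>2 \<partial>Q)
                     \<le> (\<Sum>n=1..N. (c1 * (c N)\<^sup>2 * sqrt (real N)) ^ n))"
proof (intro exI[of _ 2] allI impI)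
  \<comment> \<open>The bound holds with \<open>c1 = 2\<close> for every sequence \<open>c\<close>.\<close>
  fix c :: "nat \<Rightarrow> real" and N :: nat
  assume "1 \<le> N"
  define x where "x = (c N)\<^sup>2 * expected_meetings N"
  have "x \<le> 2 * (c N)\<^sup>2 * sqrt (real N)"
    using mult_left_mono[OF expected_meetings_le_sqrt[OF \<open>1 \<le> N\<close>], of "(c N)\<^sup>2"]
    by (simp add: x_def)
  have "(\<integral>h. (Z c N h - 1)\<^sup>2 \<partial>Q) = collision_avg ((c N)\<^sup>2) N 0 - 1"
    by (rule second_moment_Z)
  also have "\<dots> \<le> (\<Sum>k\<le>N. x ^ k) - 1"
    using collision_avg_le_geometric[of "(c N)\<^sup>2" N] by (simp add: x_def)
  also have "\<dots> = (\<Sum>k=1..N. x ^ k)"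
    by (simp add: sum.atMost_shift sum.atLeast1_atMost_eq)
  also have "\<dots> \<le> (\<Sum>k=1..N. (2 * (c N)\<^sup>2 * sqrt (real N)) ^ k)"
    using \<open>x \<le> _\<close> expected_meetings_nonneg by (intro sum_mono power_mono) (simp_all add: x_def)
  finally show "(\<integral>h. (Z c N h - 1)\<^sup>2 \<partial>Q) \<le> (\<Sum>k=1..N. (2 * (c N)\<^sup>2 * sqrt (real N)) ^ k)" .
qed

end
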